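(* Let $n \ge 2$ and let $T$ be a triangulation of the cyclic polytope $C = C(n+2,3)$, whose vertices are labelled $0,1,\dots,n+1$. Let $\{v,w\} \in F_1(T) \setminus F_1(C)$ be an internal edge with $v < w$. Then there are vertices $a, b, c$ of $C$ with $a < v < b < w < c$ such that $\{\{v,w,a\},\{v,w,b\},\{v,w,c\}\} \subseteq F_2(T)$.
   Context: The cyclic polytope $C(n+2,3)$ is the convex hull of $n+2$ points $\mu_3(t_0),\dots,\mu_3(t_{n+1})$ on the moment curve $\mu_3(t)=(t,t^2,t^3)$ with $t_0<t_1<\dots<t_{n+1}$; its vertices are labelled $0,1,\dots,n+1$ in this order, and faces are identified with their vertex sets. Its edges are $F_1(C)=\{\{0,n+1\},\{0,i\},\{i,n+1\},\{i,i+1\} : 0<i<n+1\}$ and its 2-faces are $F_2(C)=\{\{0,i,i+1\},\{i-1,i,n+1\} : 0<i<n+1\}$. A triangulation of $C$ is a set $T$ of 3-simplices (4-element subsets of $\{0,\dots,n+1\}$) such that the union of their convex hulls is $C$ and any two of them intersect in a common (possibly empty) face. For a triangulation $T$, $F_1(T)$ is the set of 2-element subsets contained in some simplex of $T$, and $F_2(T)$ is the set of 3-element subsets contained in some simplex of $T$. *)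

theory Defs
  imports "HOL-Analysis.Analysis"
begin

definition moment3 :: "real \<Rightarrow> real^3" where
  "moment3 s = vector [s, s^2, s^3]"

definition cyc_hull :: "(nat \<Rightarrow> real) \<Rightarrow> nat set \<Rightarrow> (real^3) set" where
  "cyc_hull t S = convex hull ((\<lambda>i. moment3 (t i)) ` S)"

definition cyclic_polytope :: "nat \<Rightarrow> (nat \<Rightarrow> real) \<Rightarrow> (real^3) set" where
  "cyclic_polytope n t = cyc_hull t {0..n+1}"

definition F1C :: "nat \<Rightarrow> nat set set" where
  "F1C n = {{0, n+1}} \<union> {e. \<exists>i. 0 < i \<and> i < n+1 \<and>
             (e = {0, i} \<or> e = {i, n+1} \<or> e = {i, i+1})}"

definition F2C :: "nat \<Rightarrow> nat set set" where
  "F2C n = {f. \<exists>i. 0 < i \<and> i < n+1 \<and> (f = {0, i, i+1} \<or> f = {i - 1, i, n+1})}"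

definition is_triangulation :: "nat \<Rightarrow> (nat \<Rightarrow> real) \<Rightarrow> nat set set \<Rightarrow> bool" where
  "is_triangulation n t T \<longleftrightarrow>
     (\<forall>S\<in>T. S \<subseteq> {0..n+1} \<and> card S = 4) \<and>
     \<Union>((cyc_hull t) ` T) = cyclic_polytope n t \<and>
     (\<forall>S\<in>T. \<forall>S'\<in>T.
        (cyc_hull t S \<inter> cyc_hull t S') face_of cyc_hull t S \<and>
        (cyc_hull t S \<inter> cyc_hull t S') face_of cyc_hull t S')"

definition F1T :: "nat set set \<Rightarrow> nat set set" where
  "F1T T = {e. card e = 2 \<and> (\<exists>S\<in>T. e \<subseteq> S)}"

definition F2T :: "nat set set \<Rightarrow> nat set set" where
  "F2T T = {f. card f = 3 \<and> (\<exists>S\<in>T. f \<subseteq> S)}"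

end

theory Submission
  imports Defs "HOL-Computational_Algebra.Polynomial"
begin

text \<open>
  A polynomial q of degree at most 3 is the restriction of an affine functional to the moment
  curve, so if q is nonnegative at the vertices of a simplex it is nonnegative on the whole
  simplex. Let m be the midpoint of the internal edge vw. For any vertex a, points of the
  segment from m towards a close to m lie in a simplex S of T that contains m; since S meets the
  simplex containing vw in a common face and m is interior to the segment vw, S contains v and w.
  Taking a = 0, a = v + 1 and a = n + 1, the cubics (s - t v)(s - t w)^2,
  (s - t v)(s - t w) and (s - t v)^2 (t w - s) vanish at t v and t w and are negative at t a, so
  S must have a vertex where they are negative, i.e. a vertex left of v, between v and w, or
  right of w, respectively.
\<close>

definition moment_functional :: "real poly \<Rightarrow> real^3 \<Rightarrow> real" where
  "moment_functional q y = coeff q 0 + coeff q 1 * y$1 + coeff q 2 * y$2 + coeff q 3 * y$3"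

lemma inj_moment3: "inj moment3"
  by (rule injI) (metis moment3_def vector_3(1))

lemma moment_functional_moment3:
  assumes "degree q \<le> 3"
  shows "moment_functional q (moment3 s) = poly q s"
proof -
  have "poly q s = (\<Sum>i\<le>3. coeff q i * s ^ i)"
    unfolding poly_altdef using assms
    by (intro sum.mono_neutral_left) (auto simp: coeff_eq_0)
  then show ?thesis
    by (simp add: moment_functional_def moment3_def numeral_3_eq_3 numeral_2_eq_2)
qed

lemma moment_functional_affine:
  assumes "a + b = 1"
  shows "moment_functional q (a *\<^sub>R x + b *\<^sub>R y) = a * moment_functional q x + b * moment_functional q y"
proof -
  have "coeff q 0 = (a + b) * coeff q 0"
    using assms by simp
  then show ?thesis
    by (simp add: moment_functional_def algebra_simps)
qed

lemma convex_moment_functional_nonneg: "convex {y. 0 \<le> moment_functional q y}"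
  by (auto simp: convex_def moment_functional_affine)

lemma convex_moment_functional_pos: "convex {y. 0 < moment_functional q y}"
proof (clarsimp simp: convex_def moment_functional_affine)
  fix x y :: "real^3" and a b :: real
  assume "0 < moment_functional q x" "0 < moment_functional q y" "0 \<le> a" "0 \<le> b" "a + b = 1"
  then show "0 < a * moment_functional q x + b * moment_functional q y"
    by (cases "a = 0") (auto intro: add_pos_nonneg)
qed

lemma moment3_in_convex_hull_iff: "moment3 s \<in> convex hull (moment3 ` A) \<longleftrightarrow> s \<in> A"
proof
  assume s: "moment3 s \<in> convex hull (moment3 ` A)"
  define q where "q = [:-s, 1:]^2"
  have q: "moment_functional q (moment3 x) = (x - s)^2" for x
    unfolding q_def
    by (subst moment_functional_moment3) (simp_all add: degree_power_le power2_eq_square algebra_simps)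
  show "s \<in> A"
  proof (rule ccontr)
    assume "s \<notin> A"
    then have "moment3 ` A \<subseteq> {y. 0 < moment_functional q y}"
      by (auto simp: q)
    then have "convex hull (moment3 ` A) \<subseteq> {y. 0 < moment_functional q y}"
      by (intro hull_minimal convex_moment_functional_pos)
    with s show False
      by (auto simp: q)
  qed
qed (simp add: hull_inc)

lemma cyc_hull_eq: "cyc_hull t S = convex hull (moment3 ` t ` S)"
  by (simp add: cyc_hull_def image_image)

lemma moment3_in_cyc_hull_iff:
  assumes "inj_on t (insert i S)"
  shows "moment3 (t i) \<in> cyc_hull t S \<longleftrightarrow> i \<in> S"
  using inj_on_image_mem_iff[OF assms] by (simp add: cyc_hull_eq moment3_in_convex_hull_iff subset_insertI)

lemma convex_cyc_hull: "convex (cyc_hull t S)"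
  by (simp add: cyc_hull_def)

lemma moment3_in_cyc_hull: "i \<in> S \<Longrightarrow> moment3 (t i) \<in> cyc_hull t S"
  by (simp add: cyc_hull_def hull_inc)

lemma cyc_hull_mono: "S \<subseteq> S' \<Longrightarrow> cyc_hull t S \<subseteq> cyc_hull t S'"
  by (simp add: cyc_hull_def hull_mono image_mono)

lemma closed_cyc_hull: "finite S \<Longrightarrow> closed (cyc_hull t S)"
  unfolding cyc_hull_def by (intro compact_imp_closed compact_convex_hull finite_imp_compact finite_imageI)

lemma moment3_hull_cubic_negative:
  assumes p: "(1 - \<epsilon>) *\<^sub>R midpoint (moment3 x) (moment3 y) + \<epsilon> *\<^sub>R moment3 z \<in> convex hull (moment3 ` A)"
    and "0 < \<epsilon>" and q: "degree q \<le> 3" "poly q x = 0" "poly q y = 0" "poly q z < 0"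
  shows "\<exists>s\<in>A. poly q s < 0"
proof (rule ccontr)
  assume "\<not> ?thesis"
  then have "moment3 ` A \<subseteq> {y. 0 \<le> moment_functional q y}"
    by (auto simp: moment_functional_moment3 q(1))
  then have "convex hull (moment3 ` A) \<subseteq> {y. 0 \<le> moment_functional q y}"
    by (intro hull_minimal convex_moment_functional_nonneg)
  with p have "0 \<le> moment_functional q ((1 - \<epsilon>) *\<^sub>R midpoint (moment3 x) (moment3 y) + \<epsilon> *\<^sub>R moment3 z)"
    by auto
  also have "\<dots> = \<epsilon> * poly q z"
  proof -
    have "moment_functional q (midpoint (moment3 x) (moment3 y)) = 0"
      using moment_functional_affine[of "1/2" "1/2" q "moment3 x" "moment3 y"] q
      by (simp add: midpoint_def scaleR_add_right moment_functional_moment3)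
    then show ?thesis
      using q by (simp add: moment_functional_affine moment_functional_moment3)
  qed
  finally show False
    using \<open>0 < \<epsilon>\<close> \<open>poly q z < 0\<close> by (simp add: zero_le_mult_iff)
qed

lemma closed_cover_segment_start:
  fixes m q :: "'a::real_normed_vector"
  assumes "finite \<F>" "\<And>K. K \<in> \<F> \<Longrightarrow> closed K" "closed_segment m q \<subseteq> \<Union>\<F>"
  shows "\<exists>K\<in>\<F>. m \<in> K \<and> (\<exists>\<epsilon>>0. (1 - \<epsilon>) *\<^sub>R m + \<epsilon> *\<^sub>R q \<in> K)"
proof -
  define L where "L = \<Union>{K\<in>\<F>. m \<notin> K}"
  have "open (- L)"
    unfolding L_def using assms(1,2) by (intro open_Compl closed_Union) auto
  moreover have "m \<in> - L"
    unfolding L_def by auto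
  ultimately obtain e where "0 < e" and e: "ball m e \<subseteq> - L"
    by (meson open_contains_ball)
  define N where "N = norm (q - m)"
  define \<epsilon> where "\<epsilon> = min 1 (e / (N + 1))"
  have "0 \<le> N"
    by (simp add: N_def)
  then have \<epsilon>: "0 < \<epsilon>" "\<epsilon> \<le> 1"
    using \<open>0 < e\<close> by (auto simp: \<epsilon>_def)
  define p where "p = (1 - \<epsilon>) *\<^sub>R m + \<epsilon> *\<^sub>R q"
  have "dist m p = \<epsilon> * N"
    using \<epsilon> by (simp add: p_def N_def dist_norm norm_minus_commute algebra_simps flip: scaleR_diff_right)
  also have "\<dots> \<le> e / (N + 1) * N"
    using \<open>0 \<le> N\<close> by (intro mult_right_mono) (auto simp: \<epsilon>_def)
  also have "\<dots> < e"
    using \<open>0 < e\<close> \<open>0 \<le> N\<close> by (simp add: field_simps)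
  finally have "p \<notin> L"
    using e by auto
  moreover have "p \<in> closed_segment m q"
    using \<epsilon> by (auto simp: p_def closed_segment_def)
  ultimately obtain K where "K \<in> \<F>" "p \<in> K" "m \<in> K"
    using assms(3) unfolding L_def by blast
  then show ?thesis
    using \<epsilon> p_def by blast
qed

lemma triangulation_simplex_subset:
  "is_triangulation n t T \<Longrightarrow> S \<in> T \<Longrightarrow> S \<subseteq> {0..n+1}"
  unfolding is_triangulation_def by blast

lemma finite_triangulation: "is_triangulation n t T \<Longrightarrow> finite T"
  by (meson PowI finite_Pow_iff finite_atLeastAtMost finite_subset subsetI triangulation_simplex_subset)

lemma triangulation_simplex_towards:
  assumes tri: "is_triangulation n t T"
    and "m \<in> cyclic_polytope n t" "q \<in> cyclic_polytope n t"
  shows "\<exists>S\<in>T. m \<in> cyc_hull t S \<and> (\<exists>\<epsilon>>0. (1 - \<epsilon>) *\<^sub>R m + \<epsilon> *\<^sub>R q \<in> cyc_hull t S)"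
proof -
  have "closed_segment m q \<subseteq> cyclic_polytope n t"
    using assms(2,3) convex_cyc_hull by (simp add: cyclic_polytope_def closed_segment_subset)
  also have "\<dots> = \<Union>(cyc_hull t ` T)"
    using tri unfolding is_triangulation_def by simp
  finally have "closed_segment m q \<subseteq> \<Union>(cyc_hull t ` T)" .
  moreover have "closed (cyc_hull t S)" if "S \<in> T" for S
    using finite_subset[OF triangulation_simplex_subset[OF tri that]] by (simp add: closed_cyc_hull)
  ultimately show ?thesis
    using closed_cover_segment_start[of "cyc_hull t ` T" m q] finite_triangulation[OF tri] by auto
qed

lemma triangulation_edge_simplex_towards:
  assumes tri: "is_triangulation n t T" and inj: "inj_on t {0..n+1}"
    and edge: "{v, w} \<in> F1T T" and "a \<le> n+1"
  shows "\<exists>S\<in>T. v \<in> S \<and> w \<in> S \<and> (\<exists>\<epsilon>>0.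
           (1 - \<epsilon>) *\<^sub>R midpoint (moment3 (t v)) (moment3 (t w)) + \<epsilon> *\<^sub>R moment3 (t a) \<in> cyc_hull t S)"
proof -
  define P where "P i = moment3 (t i)" for i
  define m where "m = midpoint (P v) (P w)"
  obtain S0 where S0: "S0 \<in> T" "v \<in> S0" "w \<in> S0" and "v \<noteq> w"
    using edge unfolding F1T_def by (cases "v = w") auto
  then have vw: "v \<le> n+1" "w \<le> n+1"
    using triangulation_simplex_subset[OF tri S0(1)] by auto
  have P_in_S0: "P v \<in> cyc_hull t S0" "P w \<in> cyc_hull t S0"
    using S0 by (simp_all add: P_def moment3_in_cyc_hull)
  then have m_in_S0: "m \<in> cyc_hull t S0"
    using closed_segment_subset[OF _ _ convex_cyc_hull] by (force simp: m_def)
  then have "m \<in> cyclic_polytope n t"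
    using cyc_hull_mono[OF triangulation_simplex_subset[OF tri S0(1)]] by (auto simp: cyclic_polytope_def)
  moreover have "P a \<in> cyclic_polytope n t"
    using \<open>a \<le> n+1\<close> by (simp add: cyclic_polytope_def P_def moment3_in_cyc_hull)
  ultimately obtain S \<epsilon> where
    S: "S \<in> T" "m \<in> cyc_hull t S" "0 < \<epsilon>" "(1 - \<epsilon>) *\<^sub>R m + \<epsilon> *\<^sub>R P a \<in> cyc_hull t S"
    using triangulation_simplex_towards[OF tri] by blast
  have "P v \<noteq> P w"
    using inj vw \<open>v \<noteq> w\<close> by (auto simp: P_def inj_eq[OF inj_moment3] dest: inj_onD)
  then have "m \<in> open_segment (P v) (P w)"
    by (simp add: m_def)
  moreover have "(cyc_hull t S0 \<inter> cyc_hull t S) face_of cyc_hull t S0"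
    using tri S0(1) S(1) unfolding is_triangulation_def by blast
  ultimately have "P v \<in> cyc_hull t S" "P w \<in> cyc_hull t S"
    using face_ofD P_in_S0 m_in_S0 S(2) by blast+
  moreover have "inj_on t (insert i S)" if "i \<le> n+1" for i
    using that triangulation_simplex_subset[OF tri S(1)] by (intro inj_on_subset[OF inj]) auto
  ultimately have "v \<in> S" "w \<in> S"
    using vw moment3_in_cyc_hull_iff unfolding P_def by blast+
  with S show ?thesis
    unfolding m_def P_def by blast
qed

lemma edge_triangle_with_cubic_negative_vertex:
  assumes tri: "is_triangulation n t T" and inj: "inj_on t {0..n+1}"
    and edge: "{v, w} \<in> F1T T" and "a \<le> n+1"
    and q: "degree q \<le> 3" "poly q (t v) = 0" "poly q (t w) = 0" "poly q (t a) < 0"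
  shows "\<exists>j\<le>n+1. poly q (t j) < 0 \<and> {v, w, j} \<in> F2T T"
proof -
  obtain S \<epsilon> where S: "S \<in> T" "v \<in> S" "w \<in> S" "0 < \<epsilon>"
    "(1 - \<epsilon>) *\<^sub>R midpoint (moment3 (t v)) (moment3 (t w)) + \<epsilon> *\<^sub>R moment3 (t a) \<in> cyc_hull t S"
    using triangulation_edge_simplex_towards[OF tri inj edge \<open>a \<le> n+1\<close>] by blast
  then obtain j where j: "j \<in> S" "poly q (t j) < 0"
    using moment3_hull_cubic_negative[OF _ _ q] by (fastforce simp: cyc_hull_eq)
  then have "j \<le> n+1"
    using triangulation_simplex_subset[OF tri S(1)] by auto
  moreover have "{v, w, j} \<in> F2T T"
    using j S edge q by (auto simp: F1T_def F2T_def card_insert_if)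
  ultimately show ?thesis
    using j by blast
qed

lemma F1C_memI:
  "{0, n+1} \<in> F1C n"
  "0 < i \<Longrightarrow> i < n+1 \<Longrightarrow> {0, i} \<in> F1C n"
  "0 < i \<Longrightarrow> i < n+1 \<Longrightarrow> {i, n+1} \<in> F1C n"
  "0 < i \<Longrightarrow> i < n+1 \<Longrightarrow> {i, i+1} \<in> F1C n"
  unfolding F1C_def by blast+

lemma non_boundary_edge_bounds:
  assumes "{v, w} \<notin> F1C n" "v < w" "w \<le> n+1"
  shows "0 < v" "w < n+1" "v + 1 < w"
proof -
  show "0 < v"
    using assms F1C_memI(1)[of n] F1C_memI(2)[of w n] by (cases "w = n+1"; cases "v = 0") auto
  then show "w < n+1"
    using assms F1C_memI(3)[of v n] by (cases "w = n+1") auto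
  then show "v + 1 < w"
    using assms \<open>0 < v\<close> F1C_memI(4)[of v n] by (cases "w = v + 1") auto
qed

lemma poly_linear_factor:
  fixes a x :: "'a::comm_ring_1"
  shows "poly [:- a, 1:] x = x - a" "poly [:a, - 1:] x = a - x"
  by (simp_all add: algebra_simps)

lemma edge_triangle_with_vertex_below:
  assumes tri: "is_triangulation n t T" and mono: "strict_mono_on {0..n+1} t"
    and edge: "{v, w} \<in> F1T T" and "0 < v" "v < w" "w \<le> n+1"
  shows "\<exists>a<v. {v, w, a} \<in> F2T T"
proof -
  have "t 0 < t v" "t v < t w"
    using assms by (simp_all add: strict_mono_on_less[OF mono])
  then have "\<exists>a\<le>n+1. poly ([:- t v, 1:] * [:- t w, 1:]^2) (t a) < 0 \<and> {v, w, a} \<in> F2T T"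
    by (intro edge_triangle_with_cubic_negative_vertex[OF tri strict_mono_on_imp_inj_on[OF mono] edge, of 0])
      (simp_all add: degree_mult_eq degree_power_eq mult_neg_pos del: mult_pCons_left mult_pCons_right)
  then obtain a where "a \<le> n+1" "(t a - t v) * (t a - t w)^2 < 0" "{v, w, a} \<in> F2T T"
    by (auto simp only: poly_mult poly_power poly_linear_factor)
  then show ?thesis
    using assms by (auto simp: mult_less_0_iff strict_mono_on_less[OF mono])
qed

lemma edge_triangle_with_vertex_between:
  assumes tri: "is_triangulation n t T" and mono: "strict_mono_on {0..n+1} t"
    and edge: "{v, w} \<in> F1T T" and "v + 1 < w" "w \<le> n+1"
  shows "\<exists>b. v < b \<and> b < w \<and> {v, w, b} \<in> F2T T"
proof -
  have "t v < t (v+1)" "t (v+1) < t w"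
    using assms by (simp_all add: strict_mono_on_less[OF mono])
  then have "\<exists>b\<le>n+1. poly ([:- t v, 1:] * [:- t w, 1:]) (t b) < 0 \<and> {v, w, b} \<in> F2T T"
    using assms
    by (intro edge_triangle_with_cubic_negative_vertex[OF tri strict_mono_on_imp_inj_on[OF mono] edge, of "v+1"])
      (simp_all add: degree_mult_eq mult_pos_neg del: mult_pCons_left mult_pCons_right)
  then obtain b where "b \<le> n+1" "(t b - t v) * (t b - t w) < 0" "{v, w, b} \<in> F2T T"
    by (auto simp only: poly_mult poly_linear_factor)
  then show ?thesis
    using assms by (auto simp: mult_less_0_iff strict_mono_on_less[OF mono])
qed

lemma edge_triangle_with_vertex_above:
  assumes tri: "is_triangulation n t T" and mono: "strict_mono_on {0..n+1} t"
    and edge: "{v, w} \<in> F1T T" and "v < w" "w < n+1"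
  shows "\<exists>c\<le>n+1. w < c \<and> {v, w, c} \<in> F2T T"
proof -
  have "t v < t w" "t w < t (n+1)"
    using assms by (simp_all add: strict_mono_on_less[OF mono])
  then have "\<exists>c\<le>n+1. poly ([:- t v, 1:]^2 * [:t w, -1:]) (t c) < 0 \<and> {v, w, c} \<in> F2T T"
    by (intro edge_triangle_with_cubic_negative_vertex[OF tri strict_mono_on_imp_inj_on[OF mono] edge, of "n+1"])
      (simp_all add: degree_mult_eq degree_power_eq mult_pos_neg del: mult_pCons_left mult_pCons_right)
  then obtain c where "c \<le> n+1" "(t c - t v)^2 * (t w - t c) < 0" "{v, w, c} \<in> F2T T"
    by (auto simp only: poly_mult poly_power poly_linear_factor)
  then show ?thesis
    using assms by (auto simp: mult_less_0_iff strict_mono_on_less[OF mono])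
qed

theorem lemma4:
  fixes n :: nat and t :: "nat \<Rightarrow> real" and T :: "nat set set" and v w :: nat
  assumes "n \<ge> 2"
    and "strict_mono_on {0..n+1} t"
    and "is_triangulation n t T"
    and "{v, w} \<in> F1T T - F1C n"
    and "v < w"
  shows "\<exists>a b c. a \<le> n+1 \<and> b \<le> n+1 \<and> c \<le> n+1 \<and> a < v \<and> v < b \<and> b < w \<and> w < c \<and>
           {{v, w, a}, {v, w, b}, {v, w, c}} \<subseteq> F2T T"
proof -
  have edge: "{v, w} \<in> F1T T"
    using assms(4) by simp
  have "w \<le> n+1"
    using edge triangulation_simplex_subset[OF assms(3)] by (force simp: F1T_def)
  moreover from this have "0 < v" "w < n+1" "v + 1 < w"
    using non_boundary_edge_bounds assms(4,5) by auto
  ultimately obtain a b c where "a < v" "{v, w, a} \<in> F2T T" "v < b" "b < w" "{v, w, b} \<in> F2T T"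
      "c \<le> n+1" "w < c" "{v, w, c} \<in> F2T T"
    using edge_triangle_with_vertex_below[OF assms(3,2) edge _ assms(5)]
      edge_triangle_with_vertex_between[OF assms(3,2) edge]
      edge_triangle_with_vertex_above[OF assms(3,2) edge assms(5)] by blast
  then show ?thesis
    by (intro exI[of _ a] exI[of _ b] exI[of _ c]) simp
qed

end
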